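(* Let $p\ge2$ be a fixed integer, and let $\lambda=[a_0,a_1,\ldots]_p$ and $\mu=[b_0,b_1,\ldots]_p$ be partitions in $\mathcal P$. Fix an index $i$ and let $m=\min\{a_i,b_i\}$. Let $\tilde\lambda$ be obtained from $\lambda$ by replacing $a_i$ with $a_i-m$, and $\tilde\mu$ be obtained from $\mu$ by replacing $b_i$ with $b_i-m$ (i.e. removing $m$ entries equal to $p^i$ from each). Then $\lambda$ stably embeds into $\mu$ if and only if $\tilde\lambda$ stably embeds into $\tilde\mu$.
   Context: $\mathcal P$ is the set of integral partitions (finite nonincreasing sequences of positive integers) all of whose entries are powers $p^k$, $k\ge0$. The notation $[a_0,a_1,\ldots,a_s]_p$ denotes the partition in $\mathcal P$ having exactly $a_k$ entries equal to $p^k$ for each $k$. The empty partition is allowed and embeds into every partition. The product $\lambda\times\nu$ is the partition of all products $\lambda_i\nu_j$, reordered nonincreasingly. $\lambda=[\lambda_1,\ldots,\lambda_m]$ embeds into $\mu=[\mu_1,\ldots,\mu_n]$, written $\lambda\hookrightarrow\mu$, if there is a map $\varphi:\{1,\ldots,m\}\to\{1,\ldots,n\}$ with $\sum_{i\in\varphi^{-1}(j)}\lambda_i\le\mu_j$ for all $j$. $\lambda$ stably embeds into $\mu$ if there is an integral partition $\nu$ with $\lambda\times\nu\hookrightarrow\mu\times\nu$. *)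

theory Defs
  imports Main
begin

definition is_partition :: "nat list \<Rightarrow> bool" where
  "is_partition xs \<longleftrightarrow> sorted_wrt (\<ge>) xs \<and> (\<forall>x\<in>set xs. 0 < x)"

definition ppart :: "nat \<Rightarrow> (nat \<Rightarrow> nat) \<Rightarrow> nat \<Rightarrow> nat list" where
  "ppart p a s = rev (sort (concat (map (\<lambda>k. replicate (a k) (p ^ k)) [0..<Suc s])))"

definition pmult :: "nat list \<Rightarrow> nat list \<Rightarrow> nat list" where
  "pmult lam nu = rev (sort [x * y. x \<leftarrow> lam, y \<leftarrow> nu])"

definition embeds :: "nat list \<Rightarrow> nat list \<Rightarrow> bool" where
  "embeds lam mu \<longleftrightarrow> (\<exists>\<phi> :: nat \<Rightarrow> nat.
      (\<forall>i < length lam. \<phi> i < length mu) \<and>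
      (\<forall>j < length mu. (\<Sum>i \<in> {i. i < length lam \<and> \<phi> i = j}. lam ! i) \<le> mu ! j))"

definition stably_embeds :: "nat list \<Rightarrow> nat list \<Rightarrow> bool" where
  "stably_embeds lam mu \<longleftrightarrow>
     (\<exists>nu. is_partition nu \<and> nu \<noteq> [] \<and> embeds (pmult lam nu) (pmult mu nu))"

end

(*
  For lists of powers of p, xs embeds into ys iff for every k the parts of size at least
  p^k have total size in xs at most that in ys.  Necessity: a bin receiving a part of size
  at least p^k is itself that large.  Sufficiency: greedily, from the largest power down,
  placing the parts of size p^(K+1) one per bin and splitting each unused bin of that size
  into p bins of size p^K.

  An auxiliary partition nu can be replaced by one made of powers of p (a part y with
  p^e <= y < p^(e+1) becomes y * p^(E-e) parts p^e): no threshold p^k distinguishes y from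
  p^e after multiplying by a power of p, so all threshold sums of lam x nu get multiplied
  by p^E.  Hence lam stably embeds into mu iff for some nu every threshold sum of lam x nu
  is at most that of mu x nu.  These sums are additive in the multiset of parts of lam, so
  parts common to lam and mu cancel.
*)

theory Submission
  imports Defs "HOL-Combinatorics.Permutations"
begin

lemma embedsI:
  assumes "\<And>i. i < length xs \<Longrightarrow> f i < length ys"
    and "\<And>j. j < length ys \<Longrightarrow> (\<Sum>i | i < length xs \<and> f i = j. xs ! i) \<le> ys ! j"
  shows "embeds xs ys"
  unfolding embeds_def using assms by blast

lemma embedsE:
  assumes "embeds xs ys"
  obtains f where "\<And>i. i < length xs \<Longrightarrow> f i < length ys"
    and "\<And>j. j < length ys \<Longrightarrow> (\<Sum>i | i < length xs \<and> f i = j. xs ! i) \<le> ys ! j"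
proof -
  obtain f where "\<forall>i < length xs. f i < length ys"
    and "\<forall>j < length ys. (\<Sum>i | i < length xs \<and> f i = j. xs ! i) \<le> ys ! j"
    using assms unfolding embeds_def by blast
  then show thesis
    by (intro that[of f]) auto
qed

lemma embeds_of_mset_eq:
  assumes "mset xs = mset ys"
  shows "embeds xs ys"
proof -
  obtain f where f: "f permutes {..<length ys}" "permute_list f ys = xs"
    using mset_eq_permutation[OF assms] by blast
  have len: "length xs = length ys"
    using assms by (rule mset_eq_length)
  show ?thesis
  proof (rule embedsI[where f = f])
    fix i assume "i < length xs"
    then show "f i < length ys"
      using permutes_in_image[OF f(1)] len by auto
  next
    fix j assume j: "j < length ys"
    have inv_j: "inv f j < length ys"
      using permutes_in_image[OF permutes_inv[OF f(1)]] j by auto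
    have "{i. i < length xs \<and> f i = j} = {inv f j}"
      using inv_j len permutes_inverses[OF f(1)] by auto
    then show "(\<Sum>i | i < length xs \<and> f i = j. xs ! i) \<le> ys ! j"
      using inv_j f(2) permute_list_nth[OF f(1)] permutes_inverses(1)[OF f(1)] by simp
  qed
qed

lemma embeds_trans [trans]:
  assumes "embeds xs ys" and "embeds ys zs"
  shows "embeds xs zs"
proof -
  obtain f where f_len: "\<And>i. i < length xs \<Longrightarrow> f i < length ys"
    and f_sum: "\<And>j. j < length ys \<Longrightarrow> (\<Sum>i | i < length xs \<and> f i = j. xs ! i) \<le> ys ! j"
    using assms(1) by (elim embedsE) blast
  obtain g where g_len: "\<And>i. i < length ys \<Longrightarrow> g i < length zs"
    and g_sum: "\<And>j. j < length zs \<Longrightarrow> (\<Sum>i | i < length ys \<and> g i = j. ys ! i) \<le> zs ! j"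
    using assms(2) by (elim embedsE) blast
  show ?thesis
  proof (rule embedsI[where f = "g \<circ> f"])
    fix i assume "i < length xs"
    then show "(g \<circ> f) i < length zs"
      using f_len g_len by auto
  next
    fix l assume l: "l < length zs"
    let ?S = "{i. i < length xs \<and> (g \<circ> f) i = l}"
    let ?T = "{j. j < length ys \<and> g j = l}"
    have "(\<Sum>i \<in> ?S. xs ! i) = (\<Sum>j \<in> ?T. \<Sum>i \<in> {i. i \<in> ?S \<and> f i = j}. xs ! i)"
      by (rule sum.group[symmetric]) (use f_len in auto)
    also have "\<dots> = (\<Sum>j \<in> ?T. \<Sum>i \<in> {i. i < length xs \<and> f i = j}. xs ! i)"
      by (intro sum.cong refl arg_cong[where f = "sum _"]) auto
    also have "\<dots> \<le> (\<Sum>j \<in> ?T. ys ! j)"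
      by (intro sum_mono) (use f_sum in auto)
    also have "\<dots> \<le> zs ! l"
      using g_sum l by auto
    finally show "(\<Sum>i \<in> ?S. xs ! i) \<le> zs ! l" .
  qed
qed

lemma embeds_mset_cong:
  assumes "mset xs = mset xs'" and "mset ys = mset ys'"
  shows "embeds xs ys \<longleftrightarrow> embeds xs' ys'"
  using assms embeds_trans embeds_of_mset_eq by metis

lemma embeds_Nil: "embeds [] ys"
  unfolding embeds_def by simp

lemma embeds_singleton:
  assumes "sum_list xs \<le> y"
  shows "embeds xs [y]"
proof (rule embedsI[where f = "\<lambda>_. 0"])
  fix j assume "j < length [y]"
  then have "j = 0"
    by simp
  then show "(\<Sum>i | i < length xs \<and> (\<lambda>_. 0) i = j. xs ! i) \<le> [y] ! j"
    using assms by (simp add: sum_list_sum_nth atLeast0LessThan lessThan_def)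
qed simp

lemma embeds_append:
  assumes "embeds xs ys" and "embeds xs' ys'"
  shows "embeds (xs @ xs') (ys @ ys')"
proof -
  obtain f where f_len: "\<And>i. i < length xs \<Longrightarrow> f i < length ys"
    and f_sum: "\<And>j. j < length ys \<Longrightarrow> (\<Sum>i | i < length xs \<and> f i = j. xs ! i) \<le> ys ! j"
    using assms(1) by (elim embedsE) blast
  obtain g where g_len: "\<And>i. i < length xs' \<Longrightarrow> g i < length ys'"
    and g_sum: "\<And>j. j < length ys' \<Longrightarrow> (\<Sum>i | i < length xs' \<and> g i = j. xs' ! i) \<le> ys' ! j"
    using assms(2) by (elim embedsE) blast
  define h where "h i = (if i < length xs then f i else length ys + g (i - length xs))" for i
  show ?thesis
  proof (rule embedsI[where f = h])
    fix i assume "i < length (xs @ xs')"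
    then show "h i < length (ys @ ys')"
      using f_len[of i] g_len[of "i - length xs"] by (auto simp: h_def)
  next
    fix j assume j: "j < length (ys @ ys')"
    let ?S = "{i. i < length (xs @ xs') \<and> h i = j}"
    show "(\<Sum>i \<in> ?S. (xs @ xs') ! i) \<le> (ys @ ys') ! j"
    proof (cases "j < length ys")
      case True
      then have "?S = {i. i < length xs \<and> f i = j}"
        using f_len by (auto simp: h_def split: if_splits)
      then show ?thesis
        using f_sum True by (simp add: nth_append)
    next
      case False
      have "(\<Sum>i \<in> ?S. (xs @ xs') ! i) = (\<Sum>i | i < length xs' \<and> g i = j - length ys. xs' ! i)"
        by (rule sum.reindex_bij_witness[of _ "\<lambda>i. i + length xs" "\<lambda>i. i - length xs"])
          (use False f_len in \<open>auto simp: h_def nth_append split: if_splits\<close>)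
      then show ?thesis
        using g_sum False j by (simp add: nth_append)
    qed
  qed
qed

lemma embeds_of_subset_mset:
  assumes "mset xs \<subseteq># mset ys"
  shows "embeds xs ys"
proof -
  obtain zs where "mset ys = mset (xs @ zs)"
    using assms by (metis mset_subset_eq_exists_conv ex_mset mset_append)
  moreover have "embeds (xs @ []) (xs @ zs)"
    by (intro embeds_append embeds_of_mset_eq embeds_Nil) simp
  ultimately show ?thesis
    using embeds_mset_cong by fastforce
qed

lemma embeds_replicate_mult: "embeds (replicate (p * n) x) (replicate n (p * x))"
proof (induction n)
  case 0
  then show ?case by (simp add: embeds_Nil)
next
  case (Suc n)
  have "embeds (replicate p x @ replicate (p * n) x) ([p * x] @ replicate n (p * x))"
    by (intro embeds_append embeds_singleton Suc) (simp add: sum_list_replicate)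
  then show ?case
    by (simp add: replicate_add[symmetric])
qed

definition sum_above :: "nat \<Rightarrow> nat list \<Rightarrow> nat" where
  "sum_above t xs = sum_list (filter ((\<le>) t) xs)"

lemma sum_above_eq_sum_list: "sum_above t xs = (\<Sum>x\<leftarrow>xs. if t \<le> x then x else 0)"
  using sum_list_map_filter'[of "\<lambda>x. x" "(\<le>) t" xs] by (simp add: sum_above_def)

lemma sum_above_append [simp]: "sum_above t (xs @ ys) = sum_above t xs + sum_above t ys"
  by (simp add: sum_above_def)

lemma sum_above_replicate [simp]: "sum_above t (replicate n x) = (if t \<le> x then n * x else 0)"
  by (simp add: sum_above_def sum_list_replicate)

lemma sum_above_mset_cong: "mset xs = mset ys \<Longrightarrow> sum_above t xs = sum_above t ys"
  unfolding sum_above_def by (metis mset_filter sum_mset_sum_list)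

lemma sum_above_eq_0:
  assumes "\<And>x. x \<in> set xs \<Longrightarrow> x < t"
  shows "sum_above t xs = 0"
proof -
  have "filter ((\<le>) t) xs = []"
    using assms by (auto simp: filter_empty_conv not_le)
  then show ?thesis
    by (simp add: sum_above_def)
qed

lemma sum_truncated_le_truncated_sum:
  fixes a :: "'a \<Rightarrow> nat"
  assumes "finite I"
  shows "(\<Sum>i\<in>I. if t \<le> a i then a i else 0) \<le> (if t \<le> sum a I then sum a I else 0)"
proof (cases "\<exists>i\<in>I. t \<le> a i")
  case True
  then obtain i where "i \<in> I" "t \<le> a i" by blast
  then have "t \<le> sum a I"
    using member_le_sum[OF _ _ assms] by (meson le_trans zero_le)
  then show ?thesis
    by (simp add: sum_mono)
next
  case False
  then show ?thesis by simp
qed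

lemma sum_above_le_if_embeds:
  assumes "embeds xs ys"
  shows "sum_above t xs \<le> sum_above t ys"
proof -
  obtain f where f_len: "\<And>i. i < length xs \<Longrightarrow> f i < length ys"
    and f_sum: "\<And>j. j < length ys \<Longrightarrow> (\<Sum>i | i < length xs \<and> f i = j. xs ! i) \<le> ys ! j"
    using assms by (elim embedsE) blast
  define trunc where "trunc x = (if t \<le> x then x else 0)" for x :: nat
  have sum_above_nth: "sum_above t zs = (\<Sum>i<length zs. trunc (zs ! i))" for zs
    by (simp add: sum_above_eq_sum_list trunc_def sum_list_sum_nth atLeast0LessThan)
  have "(\<Sum>i<length xs. trunc (xs ! i))
      = (\<Sum>j<length ys. \<Sum>i \<in> {i. i \<in> {..<length xs} \<and> f i = j}. trunc (xs ! i))"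
    by (rule sum.group[symmetric]) (use f_len in auto)
  also have "\<dots> \<le> (\<Sum>j<length ys. trunc (ys ! j))"
  proof (rule sum_mono)
    fix j assume j: "j \<in> {..<length ys}"
    let ?F = "{i. i \<in> {..<length xs} \<and> f i = j}"
    have "(\<Sum>i \<in> ?F. trunc (xs ! i)) \<le> trunc (\<Sum>i \<in> ?F. xs ! i)"
      unfolding trunc_def by (rule sum_truncated_le_truncated_sum) simp
    also have "\<dots> \<le> trunc (ys ! j)"
      using f_sum[of j] j by (auto simp: trunc_def)
    finally show "(\<Sum>i \<in> ?F. trunc (xs ! i)) \<le> trunc (ys ! j)" .
  qed
  finally show ?thesis
    unfolding sum_above_nth .
qed

lemma sum_above_powers_eq_0:
  fixes p :: nat
  assumes "2 \<le> p" and "set xs \<subseteq> (^) p ` {..K}" and "K < k"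
  shows "sum_above (p ^ k) xs = 0"
proof (rule sum_above_eq_0)
  fix x assume "x \<in> set xs"
  then obtain j where "j \<le> K" "x = p ^ j"
    using assms(2) by auto
  then show "x < p ^ k"
    using assms(1,3) by (simp add: power_strict_increasing)
qed

lemma mset_eq_filter_neq_append_replicate:
  "mset xs = mset (filter (\<lambda>x. x \<noteq> c) xs @ replicate (count (mset xs) c) c)"
  using multiset_partition[of "mset xs" "\<lambda>x. x \<noteq> c"]
  by (simp add: filter_eq_replicate_mset add.commute)

lemma embeds_append_replicate_top_power:
  fixes p K :: nat
  assumes p: "2 \<le> p" and low: "set xs \<subseteq> (^) p ` {..K}" "set ys \<subseteq> (^) p ` {..K}"
    and IH: "\<And>zs. set zs \<subseteq> (^) p ` {..K} \<Longrightarrow> (\<And>k. sum_above (p ^ k) xs \<le> sum_above (p ^ k) zs)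
               \<Longrightarrow> embeds xs zs"
    and le: "\<And>k. sum_above (p ^ k) (xs @ replicate A (p ^ Suc K))
               \<le> sum_above (p ^ k) (ys @ replicate B (p ^ Suc K))"
  shows "embeds (xs @ replicate A (p ^ Suc K)) (ys @ replicate B (p ^ Suc K))"
proof -
  define c where "c = p ^ Suc K"
  have c_gt: "p ^ k < c" if "k \<le> K" for k
    using p that power_strict_increasing[of k "Suc K" p] by (simp add: c_def)
  have "A * c \<le> B * c"
    using le[of "Suc K"] sum_above_powers_eq_0[OF p low(1), of "Suc K"]
      sum_above_powers_eq_0[OF p low(2), of "Suc K"]
    by (simp add: c_def)
  then have "A \<le> B"
    using c_gt[of K] by simp
  define zs where "zs = ys @ replicate (p * (B - A)) (p ^ K)"
  have "embeds xs zs"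
  proof (rule IH)
    show "set zs \<subseteq> (^) p ` {..K}"
      using low(2) by (auto simp: zs_def)
    show "sum_above (p ^ k) xs \<le> sum_above (p ^ k) zs" for k
    proof (cases "k \<le> K")
      case True
      then have "p ^ k \<le> p ^ K"
        using p by (simp add: power_increasing)
      then have "sum_above (p ^ k) zs = sum_above (p ^ k) ys + (B - A) * c"
        by (simp add: zs_def c_def)
      then show ?thesis
        using le[of k] c_gt[OF True] \<open>A \<le> B\<close> by (simp add: c_def diff_mult_distrib)
    next
      case False
      then show ?thesis
        using sum_above_powers_eq_0[OF p low(1)] by simp
    qed
  qed
  then have "embeds (xs @ replicate A c) (zs @ replicate A c)"
    using embeds_append embeds_of_mset_eq by blast
  also have "embeds (zs @ replicate A c) (ys @ replicate (B - A) c @ replicate A c)"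
    unfolding zs_def append_assoc c_def power_Suc
    using embeds_append embeds_of_mset_eq embeds_replicate_mult by blast
  finally have "embeds (xs @ replicate A c) (ys @ replicate (B - A) c @ replicate A c)" .
  moreover have "mset (ys @ replicate (B - A) c @ replicate A c) = mset (ys @ replicate B c)"
    using \<open>A \<le> B\<close> by (simp flip: replicate_add)
  ultimately show ?thesis
    unfolding c_def using embeds_mset_cong[OF refl] by blast
qed

lemma embeds_of_sum_above_le:
  fixes p K :: nat
  assumes "2 \<le> p"
  shows "set xs \<subseteq> (^) p ` {..K} \<Longrightarrow> set ys \<subseteq> (^) p ` {..K}
    \<Longrightarrow> (\<And>k. sum_above (p ^ k) xs \<le> sum_above (p ^ k) ys) \<Longrightarrow> embeds xs ys"
proof (induction K arbitrary: xs ys)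
  case 0
  then have "\<forall>x\<in>set xs. x = 1" and "\<forall>y\<in>set ys. y = 1"
    by auto
  then have "xs = replicate (length xs) 1" and "ys = replicate (length ys) 1"
    by (simp_all add: replicate_length_same)
  moreover have "sum_above 1 xs \<le> sum_above 1 ys"
    using "0.prems"(3)[of 0] by simp
  ultimately have "length xs \<le> length ys"
    by (metis sum_above_replicate le_refl mult.right_neutral)
  then have "mset xs \<subseteq># mset ys"
    by (subst \<open>xs = _\<close>, subst \<open>ys = _\<close>) (simp add: replicate_mset_msubseteq_iff)
  then show ?case
    by (rule embeds_of_subset_mset)
next
  case (Suc K)
  define c where "c = p ^ Suc K"
  define xs' where "xs' = filter (\<lambda>x. x \<noteq> c) xs"
  define ys' where "ys' = filter (\<lambda>x. x \<noteq> c) ys"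
  have xs_split: "mset xs = mset (xs' @ replicate (count (mset xs) c) c)"
    unfolding xs'_def by (rule mset_eq_filter_neq_append_replicate)
  have ys_split: "mset ys = mset (ys' @ replicate (count (mset ys) c) c)"
    unfolding ys'_def by (rule mset_eq_filter_neq_append_replicate)
  have low: "set xs' \<subseteq> (^) p ` {..K}" "set ys' \<subseteq> (^) p ` {..K}"
    using Suc.prems(1,2) by (auto simp: xs'_def ys'_def c_def atMost_Suc)
  have "embeds (xs' @ replicate (count (mset xs) c) c) (ys' @ replicate (count (mset ys) c) c)"
    unfolding c_def
  proof (rule embeds_append_replicate_top_power[OF assms low Suc.IH[OF low(1)]])
    show "sum_above (p ^ k) (xs' @ replicate (count (mset xs) (p ^ Suc K)) (p ^ Suc K))
        \<le> sum_above (p ^ k) (ys' @ replicate (count (mset ys) (p ^ Suc K)) (p ^ Suc K))" for k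
      using Suc.prems(3)[of k]
      unfolding sum_above_mset_cong[OF xs_split] sum_above_mset_cong[OF ys_split] c_def .
  qed
  then show ?case
    using embeds_mset_cong xs_split ys_split by blast
qed

lemma sum_above_concat [simp]: "sum_above t (concat xss) = (\<Sum>xs\<leftarrow>xss. sum_above t xs)"
  by (induction xss) (simp_all add: sum_above_def)

lemma sum_above_pmult:
  "sum_above t (pmult lam nu) = (\<Sum>x\<in>#mset lam. sum_above t (map ((*) x) nu))"
proof -
  have "sum_above t (pmult lam nu) = sum_above t (concat (map (\<lambda>x. map ((*) x) nu) lam))"
    by (rule sum_above_mset_cong) (simp add: pmult_def)
  also have "\<dots> = (\<Sum>x\<in>#mset lam. sum_above t (map ((*) x) nu))"
    by (simp add: comp_def flip: sum_mset_sum_list)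
  finally show ?thesis .
qed

lemma power_le_power_mult_iff:
  fixes p :: nat
  assumes "2 \<le> p" and "p ^ e \<le> y" and "y < p ^ Suc e"
  shows "p ^ k \<le> p ^ j * y \<longleftrightarrow> k \<le> j + e"
proof
  assume "p ^ k \<le> p ^ j * y"
  also have "\<dots> < p ^ j * p ^ Suc e"
    using assms by simp
  also have "\<dots> = p ^ Suc (j + e)"
    by (metis add_Suc_right power_add)
  finally show "k \<le> j + e"
    using assms(1) power_less_imp_less_exp[of p k "Suc (j + e)"] by simp
next
  assume "k \<le> j + e"
  then have "p ^ k \<le> p ^ j * p ^ e"
    using assms(1) by (simp add: power_increasing flip: power_add)
  also have "\<dots> \<le> p ^ j * y"
    using assms(2) by simp
  finally show "p ^ k \<le> p ^ j * y" .
qed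

lemma sum_above_replicate_rounded_part:
  fixes p :: nat
  assumes p: "2 \<le> p" and y: "p ^ e \<le> y" "y < p ^ Suc e" and "e \<le> E"
  shows "sum_above (p ^ k) (replicate (y * p ^ (E - e)) (p ^ j * p ^ e))
           = p ^ E * sum_above (p ^ k) [p ^ j * y]"
proof -
  have "p ^ k \<le> p ^ j * p ^ e \<longleftrightarrow> p ^ k \<le> p ^ j * y"
    using power_le_power_mult_iff[OF p order.refl] power_le_power_mult_iff[OF p y] p by simp
  then have "sum_above (p ^ k) (replicate (y * p ^ (E - e)) (p ^ j * p ^ e))
      = (if p ^ k \<le> p ^ j * y then y * p ^ (E - e) * (p ^ j * p ^ e) else 0)"
    by simp
  also have "y * p ^ (E - e) * (p ^ j * p ^ e) = p ^ E * (p ^ j * y)"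
    using \<open>e \<le> E\<close> by (simp add: ac_simps flip: power_add)
  finally show ?thesis
    by (simp add: sum_above_def)
qed

lemma power_partition_scaling:
  fixes p :: nat
  assumes p: "2 \<le> p" and nu: "is_partition nu" "nu \<noteq> []"
  obtains nu' E where "is_partition nu'" "nu' \<noteq> []" "set nu' \<subseteq> range ((^) p)"
    and "\<And>j k. sum_above (p ^ k) (map ((*) (p ^ j)) nu')
                = p ^ E * sum_above (p ^ k) (map ((*) (p ^ j)) nu)"
proof -
  have "\<forall>y\<in>set nu. \<exists>e. p ^ e \<le> y \<and> y < p ^ Suc e"
    using nu(1) ex_power_ivl1[OF p] by (auto simp: is_partition_def Suc_le_eq)
  then obtain e where e: "\<And>y. y \<in> set nu \<Longrightarrow> p ^ e y \<le> y \<and> y < p ^ Suc (e y)"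
    by metis
  define E where "E = Max (e ` set nu)"
  define L where "L = concat (map (\<lambda>y. replicate (y * p ^ (E - e y)) (p ^ e y)) nu)"
  show thesis
  proof (rule that[of "rev (sort L)" E])
    show "is_partition (rev (sort L))"
      using p by (auto simp: is_partition_def sorted_wrt_rev L_def)
    obtain y ys where "nu = y # ys"
      using nu(2) by (cases nu) auto
    moreover have "0 < y"
      using nu(1) calculation by (simp add: is_partition_def)
    ultimately have "p ^ e y \<in> set (rev (sort L))"
      using p by (simp add: L_def)
    then show "rev (sort L) \<noteq> []"
      by (metis empty_iff list.set(1))
    show "set (rev (sort L)) \<subseteq> range ((^) p)"
      by (auto simp: L_def)
    fix j k
    have "sum_above (p ^ k) (map ((*) (p ^ j)) (rev (sort L))) = sum_above (p ^ k) (map ((*) (p ^ j)) L)"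
      by (rule sum_above_mset_cong) simp
    also have "\<dots> = (\<Sum>y\<leftarrow>nu. sum_above (p ^ k) (replicate (y * p ^ (E - e y)) (p ^ j * p ^ e y)))"
      by (simp only: L_def map_concat sum_above_concat map_map comp_def map_replicate)
    also have "\<dots> = (\<Sum>y\<leftarrow>nu. p ^ E * sum_above (p ^ k) [p ^ j * y])"
      using p e by (intro arg_cong[where f = sum_list] map_cong refl sum_above_replicate_rounded_part)
        (auto simp: E_def)
    also have "\<dots> = p ^ E * sum_above (p ^ k) (map ((*) (p ^ j)) nu)"
      by (simp add: sum_above_eq_sum_list sum_list_const_mult comp_def)
    finally show "sum_above (p ^ k) (map ((*) (p ^ j)) (rev (sort L)))
        = p ^ E * sum_above (p ^ k) (map ((*) (p ^ j)) nu)" .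
  qed
qed

lemma sum_above_pmult_scaled:
  assumes "\<And>j k. sum_above (p ^ k) (map ((*) (p ^ j)) nu') = c * sum_above (p ^ k) (map ((*) (p ^ j)) nu)"
    and "set xs \<subseteq> range ((^) p)"
  shows "sum_above (p ^ k) (pmult xs nu') = c * sum_above (p ^ k) (pmult xs nu)"
proof -
  have "(\<Sum>x\<in>#mset xs. sum_above (p ^ k) (map ((*) x) nu'))
      = (\<Sum>x\<in>#mset xs. c * sum_above (p ^ k) (map ((*) x) nu))"
    by (rule arg_cong[where f = sum_mset], rule image_mset_cong) (use assms in auto)
  then show ?thesis
    by (simp add: sum_above_pmult sum_mset_distrib_left)
qed

lemma set_pmult_subset_range_power:
  assumes "set lam \<subseteq> range ((^) p)" and "set nu \<subseteq> range ((^) p)"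
  shows "set (pmult lam nu) \<subseteq> range ((^) p)"
proof
  fix z assume "z \<in> set (pmult lam nu)"
  then obtain x y where "x \<in> set lam" "y \<in> set nu" "z = x * y"
    by (auto simp: pmult_def)
  moreover obtain a b where "x = p ^ a" "y = p ^ b"
    using assms calculation by blast
  ultimately show "z \<in> range ((^) p)"
    by (simp flip: power_add)
qed

lemma finite_subset_range_power:
  assumes "finite A" and "A \<subseteq> range ((^) p)"
  obtains K where "A \<subseteq> (^) p ` {..K}"
proof -
  obtain C where "finite C" and "A = (^) p ` C"
    using finite_subset_image[OF assms] by blast
  moreover obtain K where "C \<subseteq> {..K}"
    using \<open>finite C\<close> finite_nat_set_iff_bounded_le by (auto simp: subset_eq)
  ultimately show thesis
    using that by blast
qed

lemma stably_embeds_iff_sum_above_le: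
  fixes p :: nat
  assumes p: "2 \<le> p" and lam: "set lam \<subseteq> range ((^) p)" and mu: "set mu \<subseteq> range ((^) p)"
  shows "stably_embeds lam mu \<longleftrightarrow> (\<exists>nu. is_partition nu \<and> nu \<noteq> [] \<and>
           (\<forall>k. sum_above (p ^ k) (pmult lam nu) \<le> sum_above (p ^ k) (pmult mu nu)))"
proof
  assume "stably_embeds lam mu"
  then show "\<exists>nu. is_partition nu \<and> nu \<noteq> [] \<and>
      (\<forall>k. sum_above (p ^ k) (pmult lam nu) \<le> sum_above (p ^ k) (pmult mu nu))"
    unfolding stably_embeds_def using sum_above_le_if_embeds by blast
next
  assume "\<exists>nu. is_partition nu \<and> nu \<noteq> [] \<and>
      (\<forall>k. sum_above (p ^ k) (pmult lam nu) \<le> sum_above (p ^ k) (pmult mu nu))"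
  then obtain nu where nu: "is_partition nu" "nu \<noteq> []"
    and le: "\<And>k. sum_above (p ^ k) (pmult lam nu) \<le> sum_above (p ^ k) (pmult mu nu)"
    by blast
  obtain nu' E where nu': "is_partition nu'" "nu' \<noteq> []" "set nu' \<subseteq> range ((^) p)"
    and scaled: "\<And>j k. sum_above (p ^ k) (map ((*) (p ^ j)) nu')
                   = p ^ E * sum_above (p ^ k) (map ((*) (p ^ j)) nu)"
    using power_partition_scaling[OF p nu] by blast
  obtain K where K: "set (pmult lam nu') \<union> set (pmult mu nu') \<subseteq> (^) p ` {..K}"
    using finite_subset_range_power[of "set (pmult lam nu') \<union> set (pmult mu nu')" p]
      set_pmult_subset_range_power[OF lam nu'(3)] set_pmult_subset_range_power[OF mu nu'(3)]
    by blast
  have "embeds (pmult lam nu') (pmult mu nu')"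
    by (rule embeds_of_sum_above_le[OF p]) (use K le in \<open>auto simp: sum_above_pmult_scaled[OF scaled] lam mu\<close>)
  then show "stably_embeds lam mu"
    unfolding stably_embeds_def using nu'(1,2) by blast
qed

lemma stably_embeds_cancel_common_parts:
  fixes p :: nat
  assumes p: "2 \<le> p" and powers: "set lam \<union> set mu \<union> set zs \<subseteq> range ((^) p)"
    and lam': "mset lam' = mset lam + mset zs" and mu': "mset mu' = mset mu + mset zs"
  shows "stably_embeds lam' mu' \<longleftrightarrow> stably_embeds lam mu"
proof -
  have "set lam' = set lam \<union> set zs" and "set mu' = set mu \<union> set zs"
    by (metis lam' mu' set_mset_mset set_mset_union)+
  then show ?thesis
    using powers by (simp add: stably_embeds_iff_sum_above_le[OF p] sum_above_pmult lam' mu')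
qed

lemma set_ppart_subset_range_power: "set (ppart p a s) \<subseteq> range ((^) p)"
  by (auto simp: ppart_def)

lemma mset_ppart: "mset (ppart p a s) = (\<Sum>k\<le>s. replicate_mset (a k) (p ^ k))"
  by (induction s) (simp_all add: ppart_def mset_concat)

lemma mset_ppart_fun_upd_diff:
  assumes "i \<le> s" and "m \<le> a i"
  shows "mset (ppart p a s) = mset (ppart p (a(i := a i - m)) s) + replicate_mset m (p ^ i)"
proof -
  have "replicate_mset (a k) (p ^ k)
      = replicate_mset ((a(i := a i - m)) k) (p ^ k) + (if k = i then replicate_mset m (p ^ i) else {#})"
    for k
    using assms(2) by (simp add: multiset_eq_iff)
  then show ?thesis
    using assms(1) by (simp add: mset_ppart sum.distrib)
qed

lemma ppart_fun_upd_beyond: "s < i \<Longrightarrow> ppart p (a(i := x)) s = ppart p a s"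
  unfolding ppart_def by (intro arg_cong[where f = "\<lambda>xss. rev (sort (concat xss))"] map_cong) auto

theorem corollary3p4:
  fixes p s i :: nat and a b :: "nat \<Rightarrow> nat"
  assumes "p \<ge> 2"
    and "\<forall>k > s. a k = 0" and "\<forall>k > s. b k = 0"
  shows "stably_embeds (ppart p a s) (ppart p b s) \<longleftrightarrow>
         stably_embeds (ppart p (a(i := a i - min (a i) (b i))) s)
                       (ppart p (b(i := b i - min (a i) (b i))) s)"
proof (cases "i \<le> s")
  case True
  show ?thesis
    by (rule stably_embeds_cancel_common_parts[OF assms(1), where zs = "replicate (min (a i) (b i)) (p ^ i)"])
      (use True in \<open>auto simp: set_ppart_subset_range_power mset_ppart_fun_upd_diff\<close>)
next
  case False
  then show ?thesis
    by (simp add: ppart_fun_upd_beyond)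
qed

end
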